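(* Let $X$ be a real Banach space, $k\in\mathbb N$, and $Y$ a closed subspace of $X$. Consider: (a) $Y$ has property-$(k-U)$ in $X$; (b) $Y^\perp$ is a $k$-Chebyshev subspace of $X^*$; (c) $\dim\big(\{S(X^*,x)-x^*\}\cap Y^\perp\big)<k$ for all $x\in S_Y$ and all $x^*\in S(X^*,x)$. Then (a) $\Leftrightarrow$ (b) and (b) $\Rightarrow$ (c). If $Y$ is reflexive, then (c) $\Rightarrow$ (b).
   Context: For $x\in X\setminus\{0\}$, $S(X^*,x)=\{x^*\in S_{X^*}:x^*(x)=\|x\|\}$. $Y^\perp=\{x^*\in X^*:x^*|_Y=0\}$. For a set $A$ and $a\in A$, $\dim A=\dim\operatorname{span}(A-a)$. For $y^*\in Y^*$, $HB(y^* )=\{x^*\in X^*:x^*|_Y=y^*,\ \|x^*\|=\|y^*\|\}$. $Y$ has property-$(k-U)$ in $X$ if $\dim HB(y^* )\le k-1$ for all $y^*\in S_{Y^*}$. A subspace $V$ of a Banach space $E$ is $k$-Chebyshev if it is proximinal (every $e\in E$ has a nonempty set $P_V(e)$ of nearest points in $V$) and $\dim P_V(e)\le k-1$ for all $e\in E$. *)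

theory Defs
  imports "HOL-Analysis.Analysis"
begin

text \<open>Dimension of a set A: dim span(A - a) for a in A (independent of the choice of a),
  as an extended natural number (infinite dimension = \<infinity>).\<close>
definition set_dim :: "'a::real_vector set \<Rightarrow> enat" where
  "set_dim A = (let a = (SOME a. a \<in> A); V = (\<lambda>x. x - a) ` A in
     Sup {enat (card B) | B. finite B \<and> independent B \<and> B \<subseteq> span V})"

definition dual_sphere :: "'a::real_normed_vector \<Rightarrow> ('a \<Rightarrow>\<^sub>L real) set" where
  "dual_sphere x = {f. norm f = 1 \<and> blinfun_apply f x = norm x}"

definition annihilator :: "'a::real_normed_vector set \<Rightarrow> ('a \<Rightarrow>\<^sub>L real) set" where
  "annihilator Y = {f. \<forall>y\<in>Y. blinfun_apply f y = 0}"

text \<open>The dual Y^* of a subspace Y: bounded linear functionals on Y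
  (represented as functions vanishing outside Y), with the dual norm.\<close>
definition dual_on :: "'a::real_normed_vector set \<Rightarrow> ('a \<Rightarrow> real) set" where
  "dual_on Y = {g. (\<forall>x\<in>Y. \<forall>y\<in>Y. g (x + y) = g x + g y)
                 \<and> (\<forall>c. \<forall>x\<in>Y. g (c *\<^sub>R x) = c * g x)
                 \<and> (\<exists>B. \<forall>x\<in>Y. \<bar>g x\<bar> \<le> B * norm x)
                 \<and> (\<forall>x. x \<notin> Y \<longrightarrow> g x = 0)}"

definition dual_norm_on :: "'a::real_normed_vector set \<Rightarrow> ('a \<Rightarrow> real) \<Rightarrow> real" where
  "dual_norm_on Y g = Sup {\<bar>g y\<bar> | y. y \<in> Y \<and> norm y \<le> 1}"

definition HB :: "'a::real_normed_vector set \<Rightarrow> ('a \<Rightarrow> real) \<Rightarrow> ('a \<Rightarrow>\<^sub>L real) set" where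
  "HB Y g = {f. (\<forall>y\<in>Y. blinfun_apply f y = g y) \<and> norm f = dual_norm_on Y g}"

definition property_kU :: "'a::real_normed_vector set \<Rightarrow> nat \<Rightarrow> bool" where
  "property_kU Y k \<longleftrightarrow>
     (\<forall>g\<in>dual_on Y. dual_norm_on Y g = 1 \<longrightarrow> set_dim (HB Y g) \<le> enat (k - 1))"

definition metric_proj :: "'b::real_normed_vector set \<Rightarrow> 'b \<Rightarrow> 'b set" where
  "metric_proj V e = {v\<in>V. \<forall>w\<in>V. norm (e - v) \<le> norm (e - w)}"

definition proximinal :: "'b::real_normed_vector set \<Rightarrow> bool" where
  "proximinal V \<longleftrightarrow> (\<forall>e. metric_proj V e \<noteq> {})"

definition k_chebyshev :: "'b::real_normed_vector set \<Rightarrow> nat \<Rightarrow> bool" where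
  "k_chebyshev V k \<longleftrightarrow> subspace V \<and> proximinal V \<and>
     (\<forall>e. set_dim (metric_proj V e) \<le> enat (k - 1))"

text \<open>Reflexivity of the subspace Y: the canonical map Y \<rightarrow> Y^** is onto.\<close>
definition reflexive_on :: "'a::real_normed_vector set \<Rightarrow> bool" where
  "reflexive_on Y \<longleftrightarrow>
     (\<forall>\<Phi> :: ('a \<Rightarrow> real) \<Rightarrow> real.
        (\<forall>g\<in>dual_on Y. \<forall>h\<in>dual_on Y. \<Phi> (\<lambda>x. g x + h x) = \<Phi> g + \<Phi> h)
        \<and> (\<forall>c. \<forall>g\<in>dual_on Y. \<Phi> (\<lambda>x. c * g x) = c * \<Phi> g)
        \<and> (\<exists>B. \<forall>g\<in>dual_on Y. \<bar>\<Phi> g\<bar> \<le> B * dual_norm_on Y g)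
        \<longrightarrow> (\<exists>y\<in>Y. \<forall>g\<in>dual_on Y. \<Phi> g = g y))"

end

(* Identify Y^* with the restrictions of functionals in X^*.  For e in X^*, the nearest points
   of Y^perp to e are exactly the e - h with h a Hahn-Banach extension of e|_Y, so the metric
   projection onto Y^perp is a reflected copy of HB(e|_Y).  Since HB(c g) = c HB(g) for g in
   Y^*, bounding dim HB on the unit sphere of Y^* is the same as bounding it on all of Y^*,
   which gives (a) <-> (b).

   If x is in S_Y and f in S(X^*,x), then the h in S(X^*,x) with h - f in Y^perp are exactly
   the Hahn-Banach extensions of f|_Y.  So the sets in (c) are translates of the sets HB(g)
   for the norm-one g in Y^* that attain their norm on S_Y, and (b) -> (c) follows.  When Y
   is reflexive every norm-one g attains its norm: Hahn-Banach in Y^* gives a norm-one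
   element of Y^** taking the value 1 at g, and reflexivity represents it by a point of S_Y.
   This gives (c) -> (b). *)

theory Submission
  imports Defs "HOL-Library.Function_Algebras"
begin

section \<open>The Hahn--Banach extension theorem\<close>

text \<open>Partial extensions of \<open>f\<close> dominated by \<open>p\<close> are represented by their graphs,
  so that Zorn's lemma applies with inclusion as the order.\<close>

definition dominated_linear_graph ::
    "'b::real_vector set \<Rightarrow> 'b set \<Rightarrow> ('b \<Rightarrow> real) \<Rightarrow> ('b \<Rightarrow> real) \<Rightarrow> ('b \<times> real) set \<Rightarrow> bool" where
  "dominated_linear_graph E F p f G \<longleftrightarrow>
     (\<forall>x a b. (x, a) \<in> G \<longrightarrow> (x, b) \<in> G \<longrightarrow> a = b)
   \<and> (\<forall>x a y b. (x, a) \<in> G \<longrightarrow> (y, b) \<in> G \<longrightarrow> (x + y, a + b) \<in> G)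
   \<and> (\<forall>x a c. (x, a) \<in> G \<longrightarrow> (c *\<^sub>R x, c * a) \<in> G)
   \<and> (\<forall>x\<in>F. (x, f x) \<in> G)
   \<and> (\<forall>x a. (x, a) \<in> G \<longrightarrow> x \<in> E \<and> a \<le> p x)"

lemma dominated_linear_graphD:
  assumes "dominated_linear_graph E F p f G"
  shows "(x, a) \<in> G \<Longrightarrow> (x, b) \<in> G \<Longrightarrow> a = b"
    and "(x, a) \<in> G \<Longrightarrow> (y, b) \<in> G \<Longrightarrow> (x + y, a + b) \<in> G"
    and "(x, a) \<in> G \<Longrightarrow> (c *\<^sub>R x, c * a) \<in> G"
    and "x \<in> F \<Longrightarrow> (x, f x) \<in> G"
    and "(x, a) \<in> G \<Longrightarrow> x \<in> E"
    and "(x, a) \<in> G \<Longrightarrow> a \<le> p x"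
  using assms unfolding dominated_linear_graph_def by blast+

lemma dominated_linear_graph_Union:
  assumes C: "C \<in> chains {G. dominated_linear_graph E F p f G}" and "C \<noteq> {}"
  shows "dominated_linear_graph E F p f (\<Union>C)"
proof -
  have graph: "dominated_linear_graph E F p f G" if "G \<in> C" for G
    using C that unfolding chains_def by blast
  have common: "\<exists>G\<in>C. u \<in> G \<and> v \<in> G" if "u \<in> \<Union>C" "v \<in> \<Union>C" for u v
    using C that unfolding chains_def chain_subset_def by blast
  obtain G0 where "G0 \<in> C" using \<open>C \<noteq> {}\<close> by blast
  show ?thesis
    unfolding dominated_linear_graph_def
  proof (intro conjI allI impI ballI)
    fix x a b assume "(x, a) \<in> \<Union>C" "(x, b) \<in> \<Union>C"
    with common obtain G where "G \<in> C" "(x, a) \<in> G" "(x, b) \<in> G" by blast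
    with graph show "a = b" unfolding dominated_linear_graph_def by blast
  next
    fix x a y b assume "(x, a) \<in> \<Union>C" "(y, b) \<in> \<Union>C"
    with common obtain G where "G \<in> C" "(x, a) \<in> G" "(y, b) \<in> G" by blast
    with graph show "(x + y, a + b) \<in> \<Union>C" unfolding dominated_linear_graph_def by blast
  next
    fix x a c assume "(x, a) \<in> \<Union>C"
    then obtain G where "G \<in> C" "(x, a) \<in> G" by blast
    with graph show "(c *\<^sub>R x, c * a) \<in> \<Union>C" unfolding dominated_linear_graph_def by blast
  next
    fix x assume "x \<in> F"
    with graph \<open>G0 \<in> C\<close> show "(x, f x) \<in> \<Union>C" unfolding dominated_linear_graph_def by blast
  next
    fix x a assume "(x, a) \<in> \<Union>C"
    then obtain G where "G \<in> C" "(x, a) \<in> G" by blast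
    with graph show "x \<in> E" "a \<le> p x" unfolding dominated_linear_graph_def by blast+
  qed
qed

lemma dominated_extension_positive_multiples:
  fixes p h :: "'b::real_vector \<Rightarrow> real"
  assumes "subspace D" "subspace E" "D \<subseteq> E" "z \<in> E" "0 < s"
    and p_scale: "\<And>x c. x \<in> E \<Longrightarrow> 0 \<le> c \<Longrightarrow> p (c *\<^sub>R x) = c * p x"
    and h_scale: "\<And>x c. x \<in> D \<Longrightarrow> h (c *\<^sub>R x) = c * h x"
    and bound: "\<And>v. v \<in> D \<Longrightarrow> h v + \<xi> \<le> p (v + z)"
    and "u \<in> D"
  shows "h u + s * \<xi> \<le> p (u + s *\<^sub>R z)"
proof -
  define v where "v = (1 / s) *\<^sub>R u"
  have v: "v \<in> D" "v + z \<in> E"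
    unfolding v_def using assms by (auto intro: subspace_scale subspace_add)
  have "h u + s * \<xi> = s * (h v + \<xi>)"
    using h_scale[OF v(1), of s] \<open>0 < s\<close> by (simp add: v_def distrib_left)
  also have "\<dots> \<le> s * p (v + z)"
    using bound[OF v(1)] \<open>0 < s\<close> by simp
  also have "\<dots> = p (u + s *\<^sub>R z)"
    using p_scale[OF v(2), of s] \<open>0 < s\<close> by (simp add: v_def scaleR_add_right)
  finally show ?thesis .
qed

lemma dominated_extension_one_dim:
  fixes p h :: "'b::real_vector \<Rightarrow> real"
  assumes D: "subspace D" and E: "subspace E" "D \<subseteq> E" "x0 \<in> E"
    and p_add: "\<And>x y. x \<in> E \<Longrightarrow> y \<in> E \<Longrightarrow> p (x + y) \<le> p x + p y"
    and p_scale: "\<And>x c. x \<in> E \<Longrightarrow> 0 \<le> c \<Longrightarrow> p (c *\<^sub>R x) = c * p x"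
    and h_add: "\<And>x y. x \<in> D \<Longrightarrow> y \<in> D \<Longrightarrow> h (x + y) = h x + h y"
    and h_scale: "\<And>x c. x \<in> D \<Longrightarrow> h (c *\<^sub>R x) = c * h x"
    and h_le: "\<And>x. x \<in> D \<Longrightarrow> h x \<le> p x"
  shows "\<exists>\<xi>. \<forall>u\<in>D. \<forall>t. h u + t * \<xi> \<le> p (u + t *\<^sub>R x0)"
proof -
  have sep: "h u - p (u - x0) \<le> p (v + x0) - h v" if "u \<in> D" "v \<in> D" for u v
  proof -
    have "h u + h v = h (u + v)" using h_add that by simp
    also have "\<dots> \<le> p ((u - x0) + (v + x0))" using h_le D that by (simp add: subspace_add)
    also have "\<dots> \<le> p (u - x0) + p (v + x0)"
      using E that by (intro p_add) (auto intro: subspace_diff subspace_add)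
    finally show ?thesis by simp
  qed
  define \<xi> where "\<xi> = Sup {h u - p (u - x0) | u. u \<in> D}"
  have "0 \<in> D" using D by (rule subspace_0)
  have below: "h u - p (u - x0) \<le> \<xi>" if "u \<in> D" for u
    unfolding \<xi>_def using that sep[OF _ \<open>0 \<in> D\<close>]
    by (intro cSup_upper) (auto simp: bdd_above_def)
  have above: "\<xi> \<le> p (v + x0) - h v" if "v \<in> D" for v
    unfolding \<xi>_def using that sep \<open>0 \<in> D\<close> by (intro cSup_least) auto
  show ?thesis
  proof (intro exI ballI allI)
    fix u and t :: real assume "u \<in> D"
    consider "0 < t" | "t = 0" | "t < 0" by (cases t "0::real" rule: linorder_cases) auto
    then show "h u + t * \<xi> \<le> p (u + t *\<^sub>R x0)"
    proof cases
      case 1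
      with above show ?thesis
        by (intro dominated_extension_positive_multiples[OF D E _ p_scale h_scale _ \<open>u \<in> D\<close>])
          (auto simp: algebra_simps)
    next
      case 2
      then show ?thesis using h_le \<open>u \<in> D\<close> by simp
    next
      case 3
      have "h u + (- t) * (- \<xi>) \<le> p (u + (- t) *\<^sub>R (- x0))"
        using below 3 E
        by (intro dominated_extension_positive_multiples[OF D E(1,2) _ _ p_scale h_scale _ \<open>u \<in> D\<close>])
          (auto simp: algebra_simps intro: subspace_neg)
      then show ?thesis by simp
    qed
  qed
qed

lemma coeff_unique_outside_subspace:
  assumes "subspace D" "x0 \<notin> D" "u \<in> D" "v \<in> D" "u + s *\<^sub>R x0 = v + t *\<^sub>R x0"
  shows "s = t"
proof (rule ccontr)
  assume "s \<noteq> t"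
  have "x0 = (1 / (s - t)) *\<^sub>R ((s - t) *\<^sub>R x0)"
    using \<open>s \<noteq> t\<close> by simp
  also have "(s - t) *\<^sub>R x0 = v - u"
    using assms(5) by (simp add: algebra_simps)
  finally have "x0 \<in> D"
    using assms(1,3,4) by (simp add: subspace_diff subspace_scale)
  with assms(2) show False ..
qed

lemma dominated_linear_graph_is_graph:
  assumes M: "dominated_linear_graph E F p f M" and F: "subspace F"
  obtains D h where "\<And>x a. (x, a) \<in> M \<longleftrightarrow> x \<in> D \<and> a = h x"
    and "subspace D" "D \<subseteq> E" "F \<subseteq> D"
    and "\<And>x y. x \<in> D \<Longrightarrow> y \<in> D \<Longrightarrow> h (x + y) = h x + h y"
    and "\<And>x c. x \<in> D \<Longrightarrow> h (c *\<^sub>R x) = c * h x"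
    and "\<And>x. x \<in> D \<Longrightarrow> h x \<le> p x"
    and "\<And>x. x \<in> F \<Longrightarrow> h x = f x"
proof
  define D where "D = fst ` M"
  define h where "h x = (SOME a. (x, a) \<in> M)" for x
  show M_iff: "(x, a) \<in> M \<longleftrightarrow> x \<in> D \<and> a = h x" for x a
  proof
    assume "(x, a) \<in> M"
    moreover from this have "(x, h x) \<in> M" unfolding h_def by (rule someI)
    ultimately show "x \<in> D \<and> a = h x"
      using dominated_linear_graphD(1)[OF M] unfolding D_def by force
  next
    assume "x \<in> D \<and> a = h x"
    then obtain b where "(x, b) \<in> M" "a = h x" unfolding D_def by force
    then show "(x, a) \<in> M" unfolding h_def by (auto intro: someI)
  qed
  note graph = dominated_linear_graphD[OF M, unfolded M_iff]
  have add: "x + y \<in> D \<and> h (x + y) = h x + h y" if "x \<in> D" "y \<in> D" for x y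
    using graph(2)[of x "h x" y "h y"] that by simp
  have scale: "c *\<^sub>R x \<in> D \<and> h (c *\<^sub>R x) = c * h x" if "x \<in> D" for x c
    using graph(3)[of x "h x" c] that by simp
  show "h (x + y) = h x + h y" if "x \<in> D" "y \<in> D" for x y
    using add that by blast
  show "h (c *\<^sub>R x) = c * h x" if "x \<in> D" for x c
    using scale that by blast
  show "h x \<le> p x" if "x \<in> D" for x
    using graph(6)[of x "h x"] that by simp
  show "D \<subseteq> E"
    using graph(5) by blast
  show "h x = f x" if "x \<in> F" for x
    using graph(4) that by simp
  show "F \<subseteq> D"
    using graph(4) by blast
  then show "subspace D"
    unfolding subspace_def using add scale subspace_0[OF F] by blast
qed

lemma dominated_linear_graph_adjoin:
  fixes p f h :: "'b::real_vector \<Rightarrow> real"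
  assumes D: "subspace D" and E: "subspace E" "D \<subseteq> E" "F \<subseteq> D" and x0: "x0 \<in> E" "x0 \<notin> D"
    and h_add: "\<And>x y. x \<in> D \<Longrightarrow> y \<in> D \<Longrightarrow> h (x + y) = h x + h y"
    and h_scale: "\<And>x c. x \<in> D \<Longrightarrow> h (c *\<^sub>R x) = c * h x"
    and h_f: "\<And>x. x \<in> F \<Longrightarrow> h x = f x"
    and \<xi>: "\<And>u t. u \<in> D \<Longrightarrow> h u + t * \<xi> \<le> p (u + t *\<^sub>R x0)"
  shows "dominated_linear_graph E F p f {(u + t *\<^sub>R x0, h u + t * \<xi>) | u t. u \<in> D}"
  unfolding dominated_linear_graph_def mem_Collect_eq prod.inject
proof (intro conjI allI impI ballI; (elim exE conjE)?)
  fix x a b u t v s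
  assume "x = u + t *\<^sub>R x0" "a = h u + t * \<xi>" "u \<in> D"
    "x = v + s *\<^sub>R x0" "b = h v + s * \<xi>" "v \<in> D"
  moreover from this have "t = s"
    using coeff_unique_outside_subspace[OF D x0(2)] by metis
  ultimately show "a = b" by simp
next
  fix x a y b u t v s
  assume "x = u + t *\<^sub>R x0" "a = h u + t * \<xi>" "u \<in> D"
    "y = v + s *\<^sub>R x0" "b = h v + s * \<xi>" "v \<in> D"
  then show "\<exists>w r. (x + y = w + r *\<^sub>R x0 \<and> a + b = h w + r * \<xi>) \<and> w \<in> D"
    using h_add D by (intro exI[of _ "u + v"] exI[of _ "t + s"]) (simp add: algebra_simps subspace_add)
next
  fix x a c u t
  assume "x = u + t *\<^sub>R x0" "a = h u + t * \<xi>" "u \<in> D"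
  then show "\<exists>w r. (c *\<^sub>R x = w + r *\<^sub>R x0 \<and> c * a = h w + r * \<xi>) \<and> w \<in> D"
    using h_scale D by (intro exI[of _ "c *\<^sub>R u"] exI[of _ "c * t"]) (simp add: algebra_simps subspace_scale)
next
  fix x assume "x \<in> F"
  then show "\<exists>u t. (x = u + t *\<^sub>R x0 \<and> f x = h u + t * \<xi>) \<and> u \<in> D"
    using h_f E(3) by (intro exI[of _ x] exI[of _ 0]) auto
next
  fix x a u t
  assume "x = u + t *\<^sub>R x0" "a = h u + t * \<xi>" "u \<in> D"
  then show "x \<in> E" "a \<le> p x"
    using \<xi> E x0 by (auto simp: subspace_add subspace_scale subsetD)
qed

lemma dominated_linear_graph_extend:
  fixes p f h :: "'b::real_vector \<Rightarrow> real"
  assumes M: "\<And>x a. (x, a) \<in> M \<longleftrightarrow> x \<in> D \<and> a = h x"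
    and D: "subspace D" and E: "subspace E" "D \<subseteq> E" "F \<subseteq> D" and x0: "x0 \<in> E" "x0 \<notin> D"
    and p_add: "\<And>x y. x \<in> E \<Longrightarrow> y \<in> E \<Longrightarrow> p (x + y) \<le> p x + p y"
    and p_scale: "\<And>x c. x \<in> E \<Longrightarrow> 0 \<le> c \<Longrightarrow> p (c *\<^sub>R x) = c * p x"
    and h_add: "\<And>x y. x \<in> D \<Longrightarrow> y \<in> D \<Longrightarrow> h (x + y) = h x + h y"
    and h_scale: "\<And>x c. x \<in> D \<Longrightarrow> h (c *\<^sub>R x) = c * h x"
    and h_le: "\<And>x. x \<in> D \<Longrightarrow> h x \<le> p x"
    and h_f: "\<And>x. x \<in> F \<Longrightarrow> h x = f x"
  shows "\<exists>G. dominated_linear_graph E F p f G \<and> M \<subset> G"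
proof -
  obtain \<xi> where \<xi>: "\<And>u t. u \<in> D \<Longrightarrow> h u + t * \<xi> \<le> p (u + t *\<^sub>R x0)"
    using dominated_extension_one_dim[OF D E(1,2) x0(1) p_add p_scale h_add h_scale h_le] by blast
  define G where "G = {(u + t *\<^sub>R x0, h u + t * \<xi>) | u t. u \<in> D}"
  have in_G: "(u + t *\<^sub>R x0, h u + t * \<xi>) \<in> G" if "u \<in> D" for u t
    unfolding G_def using that by blast
  have "M \<subseteq> G"
    using in_G[of _ 0] M by auto
  moreover have "(x0, \<xi>) \<in> G - M"
    using in_G[OF subspace_0[OF D], of 1] h_scale[OF subspace_0[OF D], of 0] M x0(2) by simp
  ultimately show ?thesis
    using dominated_linear_graph_adjoin[OF D E x0 h_add h_scale h_f \<xi>] unfolding G_def by blast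
qed

theorem hahn_banach:
  fixes p f :: "'b::real_vector \<Rightarrow> real"
  assumes E: "subspace E" and F: "subspace F" "F \<subseteq> E"
    and p_add: "\<And>x y. x \<in> E \<Longrightarrow> y \<in> E \<Longrightarrow> p (x + y) \<le> p x + p y"
    and p_scale: "\<And>x c. x \<in> E \<Longrightarrow> 0 \<le> c \<Longrightarrow> p (c *\<^sub>R x) = c * p x"
    and f_add: "\<And>x y. x \<in> F \<Longrightarrow> y \<in> F \<Longrightarrow> f (x + y) = f x + f y"
    and f_scale: "\<And>x c. x \<in> F \<Longrightarrow> f (c *\<^sub>R x) = c * f x"
    and f_le: "\<And>x. x \<in> F \<Longrightarrow> f x \<le> p x"
  shows "\<exists>h. (\<forall>x\<in>F. h x = f x) \<and> (\<forall>x\<in>E. \<forall>y\<in>E. h (x + y) = h x + h y)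
           \<and> (\<forall>x\<in>E. \<forall>c. h (c *\<^sub>R x) = c * h x) \<and> (\<forall>x\<in>E. h x \<le> p x)"
proof -
  let ?A = "{G. dominated_linear_graph E F p f G}"
  have graph_f: "(\<lambda>x. (x, f x)) ` F \<in> ?A"
    unfolding dominated_linear_graph_def using F f_le
    by (auto simp: f_add f_scale subspace_add subspace_scale image_iff)
  have "\<exists>M\<in>?A. \<forall>G\<in>?A. M \<subseteq> G \<longrightarrow> G = M"
  proof (intro Zorn_Lemma2 ballI)
    fix C assume C: "C \<in> chains ?A"
    show "\<exists>U\<in>?A. \<forall>G\<in>C. G \<subseteq> U"
      using graph_f dominated_linear_graph_Union[OF C] by (cases "C = {}") auto
  qed
  then obtain M where M: "dominated_linear_graph E F p f M"
    and M_max: "\<And>G. dominated_linear_graph E F p f G \<Longrightarrow> M \<subseteq> G \<Longrightarrow> G = M"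
    by blast
  obtain D h where M_iff: "\<And>x a. (x, a) \<in> M \<longleftrightarrow> x \<in> D \<and> a = h x"
    and D: "subspace D" "D \<subseteq> E" "F \<subseteq> D"
    and h: "\<And>x y. x \<in> D \<Longrightarrow> y \<in> D \<Longrightarrow> h (x + y) = h x + h y"
      "\<And>x c. x \<in> D \<Longrightarrow> h (c *\<^sub>R x) = c * h x"
      "\<And>x. x \<in> D \<Longrightarrow> h x \<le> p x" "\<And>x. x \<in> F \<Longrightarrow> h x = f x"
    using dominated_linear_graph_is_graph[OF M F(1)] by blast
  have "E \<subseteq> D"
  proof
    fix x0 assume "x0 \<in> E"
    show "x0 \<in> D"
    proof (rule ccontr)
      assume "x0 \<notin> D"
      then obtain G where "dominated_linear_graph E F p f G" "M \<subset> G"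
        using dominated_linear_graph_extend[OF M_iff D(1) E D(2,3) \<open>x0 \<in> E\<close> _ p_add p_scale h]
        by blast
      then show False
        using M_max by blast
    qed
  qed
  then show ?thesis
    using D h by (intro exI[of _ h]) blast
qed

lemma hahn_banach_normed:
  fixes g :: "'a::real_normed_vector \<Rightarrow> real"
  assumes Y: "subspace Y" and "0 \<le> c"
    and g_add: "\<And>x y. x \<in> Y \<Longrightarrow> y \<in> Y \<Longrightarrow> g (x + y) = g x + g y"
    and g_scale: "\<And>x a. x \<in> Y \<Longrightarrow> g (a *\<^sub>R x) = a * g x"
    and g_le: "\<And>y. y \<in> Y \<Longrightarrow> \<bar>g y\<bar> \<le> c * norm y"
  shows "\<exists>f. (\<forall>y\<in>Y. blinfun_apply f y = g y) \<and> norm f \<le> c"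
proof -
  have "\<exists>h. (\<forall>x\<in>Y. h x = g x) \<and> (\<forall>x\<in>UNIV. \<forall>y\<in>UNIV. h (x + y) = h x + h y)
      \<and> (\<forall>x\<in>UNIV. \<forall>a. h (a *\<^sub>R x) = a * h x) \<and> (\<forall>x\<in>UNIV. h x \<le> c * norm x)"
  proof (rule hahn_banach[OF subspace_UNIV Y])
    show "c * norm (x + y) \<le> c * norm x + c * norm y" for x y :: 'a
      using mult_left_mono[OF norm_triangle_ineq \<open>0 \<le> c\<close>] by (simp add: distrib_left)
    show "g x \<le> c * norm x" if "x \<in> Y" for x
      using g_le[OF that] by simp
  qed (use g_add g_scale in auto)
  then obtain h where h_g: "\<And>x. x \<in> Y \<Longrightarrow> h x = g x"
    and h_add: "\<And>x y. h (x + y) = h x + h y" and h_scale: "\<And>a x. h (a *\<^sub>R x) = a * h x"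
    and h_le: "\<And>x. h x \<le> c * norm x"
    by blast
  have h_lin: "linear h"
    by (simp add: linear_iff h_add h_scale)
  have h_abs: "\<bar>h x\<bar> \<le> c * norm x" for x
    using h_le[of x] h_le[of "- x"] linear_neg[OF h_lin, of x] by simp
  then have "bounded_linear h"
    using h_lin by (auto simp: bounded_linear_def bounded_linear_axioms_def mult.commute)
  then show ?thesis
    using h_g h_abs \<open>0 \<le> c\<close>
    by (intro exI[of _ "Blinfun h"]) (simp add: bounded_linear_Blinfun_apply norm_blinfun_bound)
qed

lemma line_coordinate:
  fixes x :: "'b::real_vector"
  assumes "x \<noteq> 0"
  obtains \<phi> where "\<And>t. \<phi> (t *\<^sub>R x) = t"
proof
  show "(SOME s. t *\<^sub>R x = s *\<^sub>R x) = t" for t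
    using assms by (intro some_equality) auto
qed

lemma norming_functional:
  fixes y :: "'a::real_normed_vector"
  shows "\<exists>f. norm f \<le> 1 \<and> blinfun_apply f y = norm y"
proof (cases "y = 0")
  case True
  then show ?thesis
    by (intro exI[of _ 0]) simp
next
  case False
  then obtain \<phi> where \<phi>: "\<And>t. \<phi> (t *\<^sub>R y) = t"
    using line_coordinate by blast
  have "\<exists>f. (\<forall>v\<in>span {y}. blinfun_apply f v = \<phi> v * norm y) \<and> norm f \<le> 1"
    by (rule hahn_banach_normed[OF subspace_span])
      (auto simp: span_singleton \<phi> abs_mult algebra_simps simp flip: scaleR_add_left)
  then obtain f where "\<forall>v\<in>span {y}. blinfun_apply f v = \<phi> v * norm y" "norm f \<le> 1"
    by blast
  moreover have "\<phi> y = 1"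
    using \<phi>[of 1] by simp
  ultimately show ?thesis
    by (metis mult_1 span_base singletonI)
qed

section \<open>Dimension of a set\<close>

lemma span_diffs_translate:
  assumes "a \<in> A"
  shows "span ((\<lambda>x. x - a) ` A) = span {x - y | x y. x \<in> A \<and> y \<in> A}"
  unfolding span_eq
proof
  show "(\<lambda>x. x - a) ` A \<subseteq> span {x - y | x y. x \<in> A \<and> y \<in> A}"
    using assms by (auto intro!: span_base)
  have "x - y \<in> span ((\<lambda>x. x - a) ` A)" if "x \<in> A" "y \<in> A" for x y
  proof -
    have "(x - a) - (y - a) \<in> span ((\<lambda>x. x - a) ` A)"
      using that by (intro span_diff span_base) auto
    then show ?thesis by simp
  qed
  then show "{x - y | x y. x \<in> A \<and> y \<in> A} \<subseteq> span ((\<lambda>x. x - a) ` A)"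
    by blast
qed

lemma set_dim_eq_span_diffs:
  "set_dim A =
     Sup {enat (card B) | B. finite B \<and> independent B \<and> B \<subseteq> span {x - y | x y. x \<in> A \<and> y \<in> A}}"
proof (cases "A = {}")
  case True
  then show ?thesis by (simp add: set_dim_def)
next
  case False
  have "(SOME a. a \<in> A) \<in> A"
    using False by (simp add: some_in_eq)
  show ?thesis
    unfolding set_dim_def Let_def span_diffs_translate[OF \<open>(SOME a. a \<in> A) \<in> A\<close>] ..
qed

lemma set_dim_singleton: "set_dim {a} = 0"
proof -
  have "span {x - y | x y. x \<in> {a} \<and> y \<in> {a}} = {0}"
    by simp
  moreover have "B = {}" if "independent B" "B \<subseteq> {0}" for B :: "'a set"
    using that dependent_zero by blast
  ultimately have "{enat (card B) | B. finite B \<and> independent B \<and>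
      B \<subseteq> span {x - y | x y. x \<in> {a} \<and> y \<in> {a}}} = {0}"
    by (auto simp: zero_enat_def independent_empty intro!: exI[of _ "{}"])
  then show ?thesis
    unfolding set_dim_eq_span_diffs by simp
qed

lemma span_scaleR_image:
  assumes "c \<noteq> 0"
  shows "span (scaleR c ` S) = span S"
  unfolding span_eq
proof
  show "scaleR c ` S \<subseteq> span S"
    by (auto intro: span_scale span_base)
  show "S \<subseteq> span (scaleR c ` S)"
  proof
    fix x assume "x \<in> S"
    then have "(1 / c) *\<^sub>R (c *\<^sub>R x) \<in> span (scaleR c ` S)"
      by (intro span_scale span_base imageI)
    then show "x \<in> span (scaleR c ` S)"
      using assms by simp
  qed
qed

lemma set_dim_affine_image:
  fixes A :: "'a::real_vector set"
  assumes "c \<noteq> 0"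
  shows "set_dim ((\<lambda>x. a + c *\<^sub>R x) ` A) = set_dim A"
proof -
  have "{x - y | x y. x \<in> (\<lambda>x. a + c *\<^sub>R x) ` A \<and> y \<in> (\<lambda>x. a + c *\<^sub>R x) ` A}
      = {(a + c *\<^sub>R x) - (a + c *\<^sub>R y) | x y. x \<in> A \<and> y \<in> A}" (is "?diffs_image = _")
    by blast
  also have "\<dots> = {c *\<^sub>R (x - y) | x y. x \<in> A \<and> y \<in> A}"
    by (simp add: scaleR_diff_right)
  also have "\<dots> = scaleR c ` {x - y | x y. x \<in> A \<and> y \<in> A}" (is "_ = scaleR c ` ?diffs")
    by blast
  finally have diffs: "?diffs_image = scaleR c ` ?diffs" .
  show ?thesis
    unfolding set_dim_eq_span_diffs diffs span_scaleR_image[OF assms] ..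
qed

section \<open>The dual of a subspace\<close>

text \<open>In \<open>dual_on\<close> the dual \<open>Y\<^sup>*\<close> is modelled by the functionals vanishing off \<open>Y\<close>.
  With the pointwise vector structure on functions it becomes a subspace of \<open>'a \<Rightarrow> real\<close>, so the
  Hahn--Banach theorem can be applied inside \<open>Y\<^sup>*\<close>.\<close>

instantiation "fun" :: (type, real_vector) real_vector
begin

definition scaleR_fun :: "real \<Rightarrow> ('a \<Rightarrow> 'b) \<Rightarrow> 'a \<Rightarrow> 'b" where
  "scaleR_fun c g = (\<lambda>x. c *\<^sub>R g x)"

instance
  by standard (simp_all add: scaleR_fun_def fun_eq_iff algebra_simps)

end

lemma dual_onI:
  assumes "\<And>x y. x \<in> Y \<Longrightarrow> y \<in> Y \<Longrightarrow> g (x + y) = g x + g y"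
    and "\<And>c x. x \<in> Y \<Longrightarrow> g (c *\<^sub>R x) = c * g x"
    and "\<And>x. x \<in> Y \<Longrightarrow> \<bar>g x\<bar> \<le> B * norm x"
    and "\<And>x. x \<notin> Y \<Longrightarrow> g x = 0"
  shows "g \<in> dual_on Y"
  unfolding dual_on_def using assms by blast

lemma dual_onD:
  assumes "g \<in> dual_on Y"
  shows "x \<in> Y \<Longrightarrow> y \<in> Y \<Longrightarrow> g (x + y) = g x + g y"
    and "x \<in> Y \<Longrightarrow> g (c *\<^sub>R x) = c * g x"
    and "\<exists>B. \<forall>x\<in>Y. \<bar>g x\<bar> \<le> B * norm x"
    and "x \<notin> Y \<Longrightarrow> g x = 0"
  using assms unfolding dual_on_def by blast+

lemma dual_on_0: "g \<in> dual_on Y \<Longrightarrow> g 0 = 0"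
  using dual_onD(2)[of g Y 0 0] dual_onD(4)[of g Y 0] by (cases "0 \<in> Y") auto

lemma subspace_dual_on: "subspace (dual_on Y)"
  unfolding subspace_def
proof (intro conjI ballI allI)
  show "0 \<in> dual_on Y"
    by (rule dual_onI[where B = 0]) auto
next
  fix g h assume g: "g \<in> dual_on Y" and h: "h \<in> dual_on Y"
  obtain B C where B: "\<And>x. x \<in> Y \<Longrightarrow> \<bar>g x\<bar> \<le> B * norm x"
    and C: "\<And>x. x \<in> Y \<Longrightarrow> \<bar>h x\<bar> \<le> C * norm x"
    using dual_onD(3)[OF g] dual_onD(3)[OF h] by blast
  show "g + h \<in> dual_on Y"
  proof (rule dual_onI[where B = "B + C"])
    fix x assume "x \<in> Y"
    then show "\<bar>(g + h) x\<bar> \<le> (B + C) * norm x"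
      using abs_triangle_ineq[of "g x" "h x"] B C unfolding distrib_right plus_fun_def
      by fastforce
  qed (simp_all add: dual_onD[OF g] dual_onD[OF h] algebra_simps)
next
  fix c g assume g: "g \<in> dual_on Y"
  obtain B where B: "\<And>x. x \<in> Y \<Longrightarrow> \<bar>g x\<bar> \<le> B * norm x"
    using dual_onD(3)[OF g] by blast
  show "c *\<^sub>R g \<in> dual_on Y"
  proof (rule dual_onI[where B = "\<bar>c\<bar> * B"])
    fix x assume "x \<in> Y"
    then show "\<bar>(c *\<^sub>R g) x\<bar> \<le> \<bar>c\<bar> * B * norm x"
      using B by (simp add: scaleR_fun_def abs_mult mult.assoc mult_left_mono)
  qed (simp_all add: scaleR_fun_def dual_onD[OF g] algebra_simps)
qed

lemma dual_on_bounded: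
  assumes "g \<in> dual_on Y"
  shows "bdd_above {\<bar>g y\<bar> | y. y \<in> Y \<and> norm y \<le> 1}"
proof -
  obtain B where B: "\<And>y. y \<in> Y \<Longrightarrow> \<bar>g y\<bar> \<le> B * norm y"
    using dual_onD(3)[OF assms] by blast
  have "\<bar>g y\<bar> \<le> max B 0" if "y \<in> Y" "norm y \<le> 1" for y
  proof -
    have "\<bar>g y\<bar> \<le> max B 0 * norm y"
      using B[OF that(1)] mult_right_mono[of B "max B 0" "norm y"] by simp
    also have "\<dots> \<le> max B 0"
      using mult_left_le[OF that(2), of "max B 0"] by simp
    finally show ?thesis .
  qed
  then show ?thesis
    unfolding bdd_above_def by blast
qed

lemma abs_le_dual_norm_on:
  assumes "g \<in> dual_on Y" "y \<in> Y" "norm y \<le> 1"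
  shows "\<bar>g y\<bar> \<le> dual_norm_on Y g"
  unfolding dual_norm_on_def using assms by (intro cSup_upper dual_on_bounded) blast+

lemma dual_norm_on_nonneg:
  assumes "subspace Y" "g \<in> dual_on Y"
  shows "0 \<le> dual_norm_on Y g"
  using abs_le_dual_norm_on[OF assms(2) subspace_0[OF assms(1)]] dual_on_0[OF assms(2)] by simp

lemma dual_norm_on_bound:
  assumes Y: "subspace Y" and g: "g \<in> dual_on Y" and "y \<in> Y"
  shows "\<bar>g y\<bar> \<le> dual_norm_on Y g * norm y"
proof (cases "y = 0")
  case True
  then show ?thesis
    using dual_on_0[OF g] by simp
next
  case False
  define z where "z = (1 / norm y) *\<^sub>R y"
  have "z \<in> Y" "norm z \<le> 1"
    unfolding z_def using Y \<open>y \<in> Y\<close> by (auto simp: subspace_scale)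
  then have "\<bar>g z\<bar> \<le> dual_norm_on Y g"
    by (rule abs_le_dual_norm_on[OF g])
  moreover have "g z = g y / norm y"
    unfolding z_def using dual_onD(2)[OF g \<open>y \<in> Y\<close>] by simp
  ultimately show ?thesis
    using False by (simp add: divide_le_eq)
qed

lemma dual_norm_on_le:
  assumes "subspace Y" "0 \<le> c" "\<And>y. y \<in> Y \<Longrightarrow> \<bar>g y\<bar> \<le> c * norm y"
  shows "dual_norm_on Y g \<le> c"
  unfolding dual_norm_on_def
proof (rule cSup_least)
  show "{\<bar>g y\<bar> | y. y \<in> Y \<and> norm y \<le> 1} \<noteq> {}"
    using subspace_0[OF assms(1)] by force
next
  fix a assume "a \<in> {\<bar>g y\<bar> | y. y \<in> Y \<and> norm y \<le> 1}"
  then obtain y where "y \<in> Y" "norm y \<le> 1" "a = \<bar>g y\<bar>" by blast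
  then show "a \<le> c"
    using assms(3)[of y] mult_left_le[of "norm y" c] assms(2) by simp
qed

lemma dual_norm_on_cong:
  assumes "\<And>y. y \<in> Y \<Longrightarrow> g y = h y"
  shows "dual_norm_on Y g = dual_norm_on Y h"
proof -
  have "{\<bar>g y\<bar> | y. y \<in> Y \<and> norm y \<le> 1} = {\<bar>h y\<bar> | y. y \<in> Y \<and> norm y \<le> 1}"
    using assms by force
  then show ?thesis
    unfolding dual_norm_on_def by simp
qed

lemma HB_cong: "(\<And>y. y \<in> Y \<Longrightarrow> g y = h y) \<Longrightarrow> HB Y g = HB Y h"
  using dual_norm_on_cong[of Y g h] unfolding HB_def by auto

lemma dual_norm_on_triangle:
  assumes Y: "subspace Y" and g: "g \<in> dual_on Y" and h: "h \<in> dual_on Y"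
  shows "dual_norm_on Y (g + h) \<le> dual_norm_on Y g + dual_norm_on Y h"
proof (rule dual_norm_on_le[OF Y])
  show "0 \<le> dual_norm_on Y g + dual_norm_on Y h"
    using dual_norm_on_nonneg[OF Y g] dual_norm_on_nonneg[OF Y h] by simp
next
  fix y assume "y \<in> Y"
  then show "\<bar>(g + h) y\<bar> \<le> (dual_norm_on Y g + dual_norm_on Y h) * norm y"
    using abs_triangle_ineq[of "g y" "h y"] dual_norm_on_bound[OF Y g] dual_norm_on_bound[OF Y h]
    unfolding distrib_right plus_fun_def by fastforce
qed

lemma dual_norm_on_scaleR:
  assumes Y: "subspace Y" and g: "g \<in> dual_on Y"
  shows "dual_norm_on Y (c *\<^sub>R g) = \<bar>c\<bar> * dual_norm_on Y g"
proof -
  have le: "dual_norm_on Y (a *\<^sub>R h) \<le> \<bar>a\<bar> * dual_norm_on Y h" if "h \<in> dual_on Y" for a h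
    using dual_norm_on_bound[OF Y that] dual_norm_on_nonneg[OF Y that]
    by (intro dual_norm_on_le[OF Y]) (auto simp: scaleR_fun_def abs_mult mult.assoc mult_left_mono)
  show ?thesis
  proof (cases "c = 0")
    case True
    then show ?thesis
      using le[OF g, of 0] dual_norm_on_nonneg[OF Y subspace_0[OF subspace_dual_on]] by simp
  next
    case False
    have "\<bar>c\<bar> * dual_norm_on Y g = \<bar>c\<bar> * dual_norm_on Y ((1 / c) *\<^sub>R (c *\<^sub>R g))"
      using False by simp
    also have "\<dots> \<le> \<bar>c\<bar> * (\<bar>1 / c\<bar> * dual_norm_on Y (c *\<^sub>R g))"
      using le[OF subspace_scale[OF subspace_dual_on g], of "1 / c"] by (rule mult_left_mono) simp
    also have "\<dots> = dual_norm_on Y (c *\<^sub>R g)"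
      using False by (simp add: abs_mult)
    finally show ?thesis
      using le[OF g, of c] by simp
  qed
qed

definition dual_restrict :: "'a::real_normed_vector set \<Rightarrow> ('a \<Rightarrow>\<^sub>L real) \<Rightarrow> 'a \<Rightarrow> real" where
  "dual_restrict Y f x = (if x \<in> Y then blinfun_apply f x else 0)"

lemma dual_restrict_in_dual_on:
  assumes "subspace Y"
  shows "dual_restrict Y f \<in> dual_on Y"
  using assms norm_blinfun[of f]
  by (intro dual_onI[where B = "norm f"])
    (auto simp: dual_restrict_def subspace_add subspace_scale blinfun.add_right blinfun.scaleR_right)

lemma dual_norm_on_dual_restrict:
  "dual_norm_on Y (dual_restrict Y f) = dual_norm_on Y (blinfun_apply f)"
  by (rule dual_norm_on_cong) (simp add: dual_restrict_def)

lemma dual_norm_on_blinfun_le_norm: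
  assumes "subspace Y"
  shows "dual_norm_on Y (blinfun_apply f) \<le> norm f"
  using assms norm_blinfun[of f] by (intro dual_norm_on_le) auto

lemma abs_blinfun_le_dual_norm_on:
  assumes "subspace Y" "y \<in> Y"
  shows "\<bar>blinfun_apply f y\<bar> \<le> dual_norm_on Y (blinfun_apply f) * norm y"
  using dual_norm_on_bound[OF assms(1) dual_restrict_in_dual_on[OF assms(1)] assms(2), of f]
  by (simp add: dual_norm_on_dual_restrict dual_restrict_def assms(2))

lemma HB_nonempty:
  assumes Y: "subspace Y" and g: "g \<in> dual_on Y"
  shows "HB Y g \<noteq> {}"
proof -
  obtain f where f: "\<forall>y\<in>Y. blinfun_apply f y = g y" and "norm f \<le> dual_norm_on Y g"
    using hahn_banach_normed[OF Y dual_norm_on_nonneg[OF Y g] dual_onD(1,2)[OF g]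
        dual_norm_on_bound[OF Y g]]
    by blast
  moreover have "dual_norm_on Y g = dual_norm_on Y (blinfun_apply f)"
    using f by (intro dual_norm_on_cong) simp
  ultimately have "f \<in> HB Y g"
    unfolding HB_def using dual_norm_on_blinfun_le_norm[OF Y, of f] by auto
  then show ?thesis by blast
qed

section \<open>Hahn--Banach sets and the annihilator\<close>

lemma subspace_annihilator: "subspace (annihilator Y)"
  unfolding subspace_def annihilator_def by (simp add: blinfun.add_left blinfun.scaleR_left)

lemma HB_dual_restrict: "HB Y (dual_restrict Y e) = HB Y (blinfun_apply e)"
  by (rule HB_cong) (simp add: dual_restrict_def)

lemma HB_blinfun_nonempty: "subspace Y \<Longrightarrow> HB Y (blinfun_apply e) \<noteq> {}"
  using HB_nonempty[OF _ dual_restrict_in_dual_on] by (simp add: HB_dual_restrict)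

lemma metric_proj_annihilator:
  assumes Y: "subspace Y"
  shows "metric_proj (annihilator Y) e = (\<lambda>h. e - h) ` HB Y (blinfun_apply e)"
proof -
  have dist_ge: "dual_norm_on Y (blinfun_apply e) \<le> norm (e - v)" if "v \<in> annihilator Y" for v
  proof -
    have "dual_norm_on Y (blinfun_apply e) = dual_norm_on Y (blinfun_apply (e - v))"
      using that unfolding annihilator_def by (intro dual_norm_on_cong) (simp add: blinfun.diff_left)
    then show ?thesis
      using dual_norm_on_blinfun_le_norm[OF Y, of "e - v"] by simp
  qed
  have HB_iff: "e - v \<in> HB Y (blinfun_apply e) \<longleftrightarrow> norm (e - v) = dual_norm_on Y (blinfun_apply e)"
    if "v \<in> annihilator Y" for v
    using that unfolding HB_def annihilator_def by (simp add: blinfun.diff_left)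
  have annihilator_HB: "e - h \<in> annihilator Y" if "h \<in> HB Y (blinfun_apply e)" for h
    using that unfolding HB_def annihilator_def by (simp add: blinfun.diff_left)
  obtain h0 where h0: "h0 \<in> HB Y (blinfun_apply e)"
    using HB_blinfun_nonempty[OF Y] by blast
  show ?thesis
  proof (intro set_eqI iffI)
    fix v assume "v \<in> metric_proj (annihilator Y) e"
    then have v: "v \<in> annihilator Y" "norm (e - v) \<le> norm (e - (e - h0))"
      unfolding metric_proj_def using annihilator_HB[OF h0] by auto
    moreover have "norm h0 = dual_norm_on Y (blinfun_apply e)"
      using h0 unfolding HB_def by simp
    ultimately have "e - v \<in> HB Y (blinfun_apply e)"
      using HB_iff dist_ge by (simp add: antisym)
    then show "v \<in> (\<lambda>h. e - h) ` HB Y (blinfun_apply e)"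
      by (rule image_eqI[rotated]) simp
  next
    fix v assume "v \<in> (\<lambda>h. e - h) ` HB Y (blinfun_apply e)"
    then obtain h where h: "h \<in> HB Y (blinfun_apply e)" "v = e - h" by blast
    moreover have "norm h = dual_norm_on Y (blinfun_apply e)"
      using h unfolding HB_def by simp
    ultimately show "v \<in> metric_proj (annihilator Y) e"
      unfolding metric_proj_def using annihilator_HB dist_ge by auto
  qed
qed

lemma k_chebyshev_annihilator_iff:
  assumes Y: "subspace Y"
  shows "k_chebyshev (annihilator Y) k \<longleftrightarrow> (\<forall>e. set_dim (HB Y (blinfun_apply e)) \<le> enat (k - 1))"
proof -
  have "set_dim (metric_proj (annihilator Y) e) = set_dim (HB Y (blinfun_apply e))" for e
    using set_dim_affine_image[of "-1" e "HB Y (blinfun_apply e)"]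
    by (simp add: metric_proj_annihilator[OF Y])
  moreover have "proximinal (annihilator Y)"
    unfolding proximinal_def metric_proj_annihilator[OF Y] using HB_blinfun_nonempty[OF Y] by simp
  ultimately show ?thesis
    unfolding k_chebyshev_def using subspace_annihilator[of Y] by simp
qed

lemma HB_scaleR:
  assumes Y: "subspace Y" and g: "g \<in> dual_on Y" and c: "c \<noteq> 0"
  shows "HB Y (c *\<^sub>R g) = scaleR c ` HB Y g"
proof (intro set_eqI iffI)
  fix h assume "h \<in> HB Y (c *\<^sub>R g)"
  then have "(1 / c) *\<^sub>R h \<in> HB Y g"
    using c unfolding HB_def dual_norm_on_scaleR[OF Y g]
    by (simp add: scaleR_fun_def blinfun.scaleR_left)
  then show "h \<in> scaleR c ` HB Y g"
    using c by (intro image_eqI[of _ _ "(1 / c) *\<^sub>R h"]) simp_all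
next
  fix h assume "h \<in> scaleR c ` HB Y g"
  then obtain h' where "h' \<in> HB Y g" "h = c *\<^sub>R h'"
    by blast
  then show "h \<in> HB Y (c *\<^sub>R g)"
    unfolding HB_def dual_norm_on_scaleR[OF Y g] by (simp add: scaleR_fun_def blinfun.scaleR_left)
qed

lemma property_kU_iff_all_functionals:
  assumes Y: "subspace Y"
  shows "property_kU Y k \<longleftrightarrow> (\<forall>g\<in>dual_on Y. set_dim (HB Y g) \<le> enat (k - 1))"
proof (intro iffI ballI)
  fix g assume kU: "property_kU Y k" and g: "g \<in> dual_on Y"
  define r where "r = dual_norm_on Y g"
  show "set_dim (HB Y g) \<le> enat (k - 1)"
  proof (cases "r = 0")
    case True
    then have "HB Y g \<subseteq> {0}"
      unfolding HB_def r_def by auto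
    then have "HB Y g = {0}"
      using HB_nonempty[OF Y g] by blast
    then show ?thesis
      by (simp add: set_dim_singleton)
  next
    case False
    define g1 where "g1 = (1 / r) *\<^sub>R g"
    have g1: "g1 \<in> dual_on Y" "dual_norm_on Y g1 = 1"
      using g False dual_norm_on_nonneg[OF Y g]
      by (auto simp: g1_def r_def dual_norm_on_scaleR[OF Y] subspace_scale[OF subspace_dual_on])
    have "HB Y g = scaleR r ` HB Y g1"
      using HB_scaleR[OF Y g1(1) False] False by (simp add: g1_def)
    then have "set_dim (HB Y g) = set_dim (HB Y g1)"
      using set_dim_affine_image[OF False, of 0 "HB Y g1"] by simp
    with kU g1 show ?thesis
      unfolding property_kU_def by simp
  qed
qed (simp add: property_kU_def)

lemma HB_eq_HB_extension:
  assumes "e \<in> HB Y g"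
  shows "HB Y (blinfun_apply e) = HB Y g"
  using assms by (intro HB_cong) (simp add: HB_def)

lemma property_kU_iff_k_chebyshev:
  assumes Y: "subspace Y"
  shows "property_kU Y k \<longleftrightarrow> k_chebyshev (annihilator Y) k"
  unfolding property_kU_iff_all_functionals[OF Y] k_chebyshev_annihilator_iff[OF Y]
proof
  assume "\<forall>g\<in>dual_on Y. set_dim (HB Y g) \<le> enat (k - 1)"
  then show "\<forall>e. set_dim (HB Y (blinfun_apply e)) \<le> enat (k - 1)"
    using dual_restrict_in_dual_on[OF Y] by (metis HB_dual_restrict)
next
  assume all_e: "\<forall>e. set_dim (HB Y (blinfun_apply e)) \<le> enat (k - 1)"
  show "\<forall>g\<in>dual_on Y. set_dim (HB Y g) \<le> enat (k - 1)"
  proof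
    fix g assume "g \<in> dual_on Y"
    then obtain e where "e \<in> HB Y g"
      using HB_nonempty[OF Y] by blast
    then show "set_dim (HB Y g) \<le> enat (k - 1)"
      using all_e HB_eq_HB_extension by metis
  qed
qed

lemma HB_eq_dual_sphere_annihilator:
  assumes Y: "subspace Y" and x: "x \<in> Y" "norm x = 1" and f: "f \<in> dual_sphere x"
  shows "HB Y (blinfun_apply f) = {h \<in> dual_sphere x. h - f \<in> annihilator Y}"
proof -
  have f1: "norm f = 1" "blinfun_apply f x = 1"
    using f x unfolding dual_sphere_def by auto
  then have "dual_norm_on Y (blinfun_apply f) = 1"
    using dual_norm_on_blinfun_le_norm[OF Y, of f] abs_blinfun_le_dual_norm_on[OF Y x(1), of f] x(2)
    by simp
  then show ?thesis
    unfolding HB_def dual_sphere_def annihilator_def using x f1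
    by (auto simp: blinfun.diff_left)
qed

lemma set_dim_dual_sphere_annihilator:
  assumes "subspace Y" "x \<in> Y" "norm x = 1" "f \<in> dual_sphere x"
  shows "set_dim ((\<lambda>h. h - f) ` dual_sphere x \<inter> annihilator Y) = set_dim (HB Y (blinfun_apply f))"
proof -
  have "(\<lambda>h. h - f) ` dual_sphere x \<inter> annihilator Y
      = (\<lambda>h. - f + 1 *\<^sub>R h) ` {h \<in> dual_sphere x. h - f \<in> annihilator Y}"
    by auto
  then show ?thesis
    using set_dim_affine_image[of 1 "- f"] HB_eq_dual_sphere_annihilator[OF assms] by simp
qed

lemma bidual_norming_functional:
  assumes Y: "subspace Y" and g: "g \<in> dual_on Y" and g1: "dual_norm_on Y g = 1"
  obtains \<Phi> where "\<Phi> g = 1"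
    and "\<And>h1 h2. h1 \<in> dual_on Y \<Longrightarrow> h2 \<in> dual_on Y \<Longrightarrow> \<Phi> (h1 + h2) = \<Phi> h1 + \<Phi> h2"
    and "\<And>h c. h \<in> dual_on Y \<Longrightarrow> \<Phi> (c *\<^sub>R h) = c * \<Phi> h"
    and "\<And>h. h \<in> dual_on Y \<Longrightarrow> \<bar>\<Phi> h\<bar> \<le> dual_norm_on Y h"
proof -
  have "g \<noteq> 0"
    using g1 dual_norm_on_le[OF Y order_refl, of 0] by auto
  then obtain \<phi> where \<phi>: "\<And>t. \<phi> (t *\<^sub>R g) = t"
    using line_coordinate by blast
  have "\<exists>\<Phi>. (\<forall>h\<in>span {g}. \<Phi> h = \<phi> h)
      \<and> (\<forall>h1\<in>dual_on Y. \<forall>h2\<in>dual_on Y. \<Phi> (h1 + h2) = \<Phi> h1 + \<Phi> h2)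
      \<and> (\<forall>h\<in>dual_on Y. \<forall>c. \<Phi> (c *\<^sub>R h) = c * \<Phi> h)
      \<and> (\<forall>h\<in>dual_on Y. \<Phi> h \<le> dual_norm_on Y h)"
  proof (rule hahn_banach[OF subspace_dual_on subspace_span])
    show "span {g} \<subseteq> dual_on Y"
      using g by (intro span_minimal subspace_dual_on) auto
    show "dual_norm_on Y (h1 + h2) \<le> dual_norm_on Y h1 + dual_norm_on Y h2"
      if "h1 \<in> dual_on Y" "h2 \<in> dual_on Y" for h1 h2
      using dual_norm_on_triangle[OF Y that] .
    show "dual_norm_on Y (c *\<^sub>R h) = c * dual_norm_on Y h" if "h \<in> dual_on Y" "0 \<le> c" for h c
      using dual_norm_on_scaleR[OF Y that(1)] that(2) by simp
    show "\<phi> h \<le> dual_norm_on Y h" if "h \<in> span {g}" for h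
      using that \<phi> dual_norm_on_scaleR[OF Y g] g1 by (auto simp: span_singleton)
  qed (auto simp: span_singleton \<phi> simp flip: scaleR_add_left)
  then obtain \<Phi> where \<Phi>_\<phi>: "\<And>h. h \<in> span {g} \<Longrightarrow> \<Phi> h = \<phi> h"
    and \<Phi>_add: "\<And>h1 h2. h1 \<in> dual_on Y \<Longrightarrow> h2 \<in> dual_on Y \<Longrightarrow> \<Phi> (h1 + h2) = \<Phi> h1 + \<Phi> h2"
    and \<Phi>_scale: "\<And>h c. h \<in> dual_on Y \<Longrightarrow> \<Phi> (c *\<^sub>R h) = c * \<Phi> h"
    and \<Phi>_le: "\<And>h. h \<in> dual_on Y \<Longrightarrow> \<Phi> h \<le> dual_norm_on Y h"
    by blast
  show ?thesis
  proof
    show "\<Phi> g = 1"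
      using \<Phi>_\<phi>[OF span_base] \<phi>[of 1] by simp
    show "\<bar>\<Phi> h\<bar> \<le> dual_norm_on Y h" if "h \<in> dual_on Y" for h
      using \<Phi>_le[OF that] \<Phi>_le[OF subspace_scale[OF subspace_dual_on that, of "-1"]]
        \<Phi>_scale[OF that, of "-1"] dual_norm_on_scaleR[OF Y that, of "-1"] by simp
  qed (fact \<Phi>_add \<Phi>_scale)+
qed

lemma norm_attained_if_reflexive:
  fixes Y :: "'a::real_normed_vector set"
  assumes Y: "subspace Y" and refl: "reflexive_on Y"
    and g: "g \<in> dual_on Y" and g1: "dual_norm_on Y g = 1"
  shows "\<exists>y\<in>Y. norm y = 1 \<and> g y = 1"
proof -
  obtain \<Phi> where \<Phi>_g: "\<Phi> g = 1"
    and \<Phi>_add: "\<And>h1 h2. h1 \<in> dual_on Y \<Longrightarrow> h2 \<in> dual_on Y \<Longrightarrow> \<Phi> (h1 + h2) = \<Phi> h1 + \<Phi> h2"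
    and \<Phi>_scale: "\<And>h c. h \<in> dual_on Y \<Longrightarrow> \<Phi> (c *\<^sub>R h) = c * \<Phi> h"
    and \<Phi>_abs: "\<And>h. h \<in> dual_on Y \<Longrightarrow> \<bar>\<Phi> h\<bar> \<le> dual_norm_on Y h"
    using bidual_norming_functional[OF Y g g1] by blast
  have "(\<forall>h1\<in>dual_on Y. \<forall>h2\<in>dual_on Y. \<Phi> (\<lambda>x. h1 x + h2 x) = \<Phi> h1 + \<Phi> h2)
      \<and> (\<forall>c. \<forall>h\<in>dual_on Y. \<Phi> (\<lambda>x. c * h x) = c * \<Phi> h)
      \<and> (\<exists>B. \<forall>h\<in>dual_on Y. \<bar>\<Phi> h\<bar> \<le> B * dual_norm_on Y h)"
    using \<Phi>_add \<Phi>_scale \<Phi>_abs by (auto simp: plus_fun_def scaleR_fun_def intro: exI[of _ 1])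
  then obtain y where "y \<in> Y" and y: "\<And>h. h \<in> dual_on Y \<Longrightarrow> \<Phi> h = h y"
    using refl unfolding reflexive_on_def by blast
  obtain f where f: "norm f \<le> 1" "blinfun_apply f y = norm y"
    using norming_functional by blast
  have "norm y = \<Phi> (dual_restrict Y f)"
    using y[OF dual_restrict_in_dual_on[OF Y]] f(2) \<open>y \<in> Y\<close> by (simp add: dual_restrict_def)
  also have "\<dots> \<le> dual_norm_on Y (blinfun_apply f)"
    using \<Phi>_abs[OF dual_restrict_in_dual_on[OF Y], of f] by (simp add: dual_norm_on_dual_restrict)
  also have "\<dots> \<le> 1"
    using dual_norm_on_blinfun_le_norm[OF Y, of f] f(1) by simp
  finally have "norm y \<le> 1" .
  moreover have "g y = 1"
    using y[OF g] \<Phi>_g by simp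
  moreover have "\<bar>g y\<bar> \<le> norm y"
    using dual_norm_on_bound[OF Y g \<open>y \<in> Y\<close>] g1 by simp
  ultimately show ?thesis
    using \<open>y \<in> Y\<close> by (intro bexI[of _ y]) auto
qed

lemma enat_less_iff_le_pred: "1 \<le> k \<Longrightarrow> d < enat k \<longleftrightarrow> d \<le> enat (k - 1)"
  by (cases d) auto

lemma dim_dual_sphere_annihilator_if_k_chebyshev:
  assumes Y: "subspace Y" and "1 \<le> k" "k_chebyshev (annihilator Y) k"
    and "x \<in> Y" "norm x = 1" "f \<in> dual_sphere x"
  shows "set_dim ((\<lambda>h. h - f) ` dual_sphere x \<inter> annihilator Y) < enat k"
  using assms k_chebyshev_annihilator_iff[OF Y] set_dim_dual_sphere_annihilator[OF Y]
    enat_less_iff_le_pred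
  by simp

lemma property_kU_if_reflexive:
  assumes Y: "subspace Y" and "1 \<le> k" "reflexive_on Y"
    and small: "\<forall>x\<in>Y. norm x = 1 \<longrightarrow> (\<forall>f\<in>dual_sphere x.
            set_dim ((\<lambda>h. h - f) ` dual_sphere x \<inter> annihilator Y) < enat k)"
  shows "property_kU Y k"
  unfolding property_kU_def
proof (intro ballI impI)
  fix g assume g: "g \<in> dual_on Y" "dual_norm_on Y g = 1"
  obtain y where y: "y \<in> Y" "norm y = 1" "g y = 1"
    using norm_attained_if_reflexive[OF Y \<open>reflexive_on Y\<close> g] by blast
  obtain f where f: "f \<in> HB Y g"
    using HB_nonempty[OF Y g(1)] by blast
  then have "f \<in> dual_sphere y"
    using y g(2) unfolding HB_def dual_sphere_def by auto
  then show "set_dim (HB Y g) \<le> enat (k - 1)"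
    using small y set_dim_dual_sphere_annihilator[OF Y y(1,2)] HB_eq_HB_extension[OF f]
      enat_less_iff_le_pred[OF \<open>1 \<le> k\<close>]
    by metis
qed

theorem theorem4p5:
  fixes Y :: "'a::banach set" and k :: nat
  assumes "k \<ge> 1" and "subspace Y" and "closed Y"
  shows "(property_kU Y k \<longleftrightarrow> k_chebyshev (annihilator Y) k)
    \<and> (k_chebyshev (annihilator Y) k \<longrightarrow>
         (\<forall>x\<in>Y. norm x = 1 \<longrightarrow> (\<forall>f\<in>dual_sphere x.
            set_dim ((\<lambda>h. h - f) ` dual_sphere x \<inter> annihilator Y) < enat k)))
    \<and> (reflexive_on Y \<longrightarrow>
         (\<forall>x\<in>Y. norm x = 1 \<longrightarrow> (\<forall>f\<in>dual_sphere x.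
            set_dim ((\<lambda>h. h - f) ` dual_sphere x \<inter> annihilator Y) < enat k))
         \<longrightarrow> k_chebyshev (annihilator Y) k)"
  using property_kU_iff_k_chebyshev[OF \<open>subspace Y\<close>]
    dim_dual_sphere_annihilator_if_k_chebyshev[OF \<open>subspace Y\<close> \<open>k \<ge> 1\<close>]
    property_kU_if_reflexive[OF \<open>subspace Y\<close> \<open>k \<ge> 1\<close>]
  by blast

end
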